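(* For all integers $n\ge 1$ and $q\ge 2$, $N(H(n,q))=n(q-1)$.
   Context: The Hamming graph $H(n,q)$ has as vertices all words of length $n$ over the alphabet $\{1,\dots,q\}$, two words being adjacent iff they differ in exactly one coordinate. A $t$-address is a $t$-tuple with entries in $\{0,a,b\}$ (three distinct symbols). An addressing of length $t$ of a connected graph $G$ is an assignment of $t$-addresses to the vertices such that for any two vertices $u,v$, the graph distance $d(u,v)$ equals the number of coordinates in which one of the two addresses equals $a$ and the other equals $b$. $N(G)$ is the minimum $t$ such that $G$ has an addressing of length $t$. *)

theory Defs
  imports Main
begin

definition has_walk_of_length :: "'v set \<Rightarrow> ('v \<Rightarrow> 'v \<Rightarrow> bool) \<Rightarrow> 'v \<Rightarrow> 'v \<Rightarrow> nat \<Rightarrow> bool" where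
  "has_walk_of_length V E u v k \<longleftrightarrow>
     (\<exists>p. length p = Suc k \<and> hd p = u \<and> last p = v \<and> set p \<subseteq> V \<and>
          (\<forall>i<k. E (p ! i) (p ! Suc i)))"

definition graph_dist :: "'v set \<Rightarrow> ('v \<Rightarrow> 'v \<Rightarrow> bool) \<Rightarrow> 'v \<Rightarrow> 'v \<Rightarrow> nat" where
  "graph_dist V E u v = (LEAST k. has_walk_of_length V E u v k)"

datatype addr_sym = S0 | Sa | Sb

definition addr_dist :: "nat \<Rightarrow> addr_sym list \<Rightarrow> addr_sym list \<Rightarrow> nat" where
  "addr_dist t x y = card {i. i < t \<and> ((x ! i = Sa \<and> y ! i = Sb) \<or> (x ! i = Sb \<and> y ! i = Sa))}"

definition is_addressing :: "'v set \<Rightarrow> ('v \<Rightarrow> 'v \<Rightarrow> bool) \<Rightarrow> nat \<Rightarrow> ('v \<Rightarrow> addr_sym list) \<Rightarrow> bool" where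
  "is_addressing V E t f \<longleftrightarrow>
     (\<forall>v\<in>V. length (f v) = t) \<and>
     (\<forall>u\<in>V. \<forall>v\<in>V. graph_dist V E u v = addr_dist t (f u) (f v))"

definition addressing_number :: "'v set \<Rightarrow> ('v \<Rightarrow> 'v \<Rightarrow> bool) \<Rightarrow> nat" where
  "addressing_number V E = (LEAST t. \<exists>f. is_addressing V E t f)"

definition hamming_vertices :: "nat \<Rightarrow> nat \<Rightarrow> nat list set" where
  "hamming_vertices n q = {w. length w = n \<and> set w \<subseteq> {1..q}}"

definition hamming_adj :: "nat \<Rightarrow> nat list \<Rightarrow> nat list \<Rightarrow> bool" where
  "hamming_adj n u v \<longleftrightarrow> card {i. i < n \<and> u ! i \<noteq> v ! i} = 1"

end

theory Submission
  imports Defs Complex_Main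
begin

(*
  Upper bound: write each letter x \<in> {1..q} in unary on q - 1 positions, as b\<dots>b a 0\<dots>0 with
  the a in position x; two different letters then disagree as {a, b} in exactly one position
  (namely min x y), so concatenating the codes of the n coordinates gives an addressing whose
  distance is the Hamming distance.

  Lower bound (in the spirit of Graham and Pollak): for an addressing of length t, the distance
  matrix is D = \<Sum>k (\<alpha>k \<beta>k\<^sup>T + \<beta>k \<alpha>k\<^sup>T) with \<alpha>k, \<beta>k the indicator vectors of the symbols a, b
  in position k, so c\<^sup>T D c = 0 whenever c is orthogonal to all \<alpha>k. For the Hamming distance on the
  other hand c\<^sup>T D c = -\<Sum>(k, x) (\<Sum>p c p [w p ! k = x])\<^sup>2 as soon as \<Sum>p c p = 0. If t < n (q - 1),
  linear algebra yields a nonzero such c on the n (q - 1) + 1 words that differ from 1\<dots>1 in at most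
  one coordinate, and the vanishing of all the inner sums forces c = 0.
*)

definition hamming_dist :: "nat \<Rightarrow> 'a list \<Rightarrow> 'a list \<Rightarrow> nat" where
  "hamming_dist n u v = card {i. i < n \<and> u ! i \<noteq> v ! i}"

lemma hamming_dist_triangle: "hamming_dist n u v \<le> hamming_dist n u w + hamming_dist n w v"
proof -
  have "{i. i < n \<and> u ! i \<noteq> v ! i} \<subseteq> {i. i < n \<and> u ! i \<noteq> w ! i} \<union> {i. i < n \<and> w ! i \<noteq> v ! i}"
    by auto
  then have "hamming_dist n u v \<le> card ({i. i < n \<and> u ! i \<noteq> w ! i} \<union> {i. i < n \<and> w ! i \<noteq> v ! i})"
    unfolding hamming_dist_def by (intro card_mono) auto
  also have "\<dots> \<le> hamming_dist n u w + hamming_dist n w v"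
    unfolding hamming_dist_def by (rule card_Un_le)
  finally show ?thesis .
qed

lemma hamming_dist_eq_0_iff:
  assumes "length u = n" "length v = n"
  shows "hamming_dist n u v = 0 \<longleftrightarrow> u = v"
  using assms by (auto simp: hamming_dist_def list_eq_iff_nth_eq)

lemma has_walk_of_length_dist_le:
  assumes "has_walk_of_length V E u v k"
    and "\<And>x y z. d x z \<le> d x y + d y z" and "\<And>x. d x x = 0" and "\<And>x y. E x y \<Longrightarrow> d x y \<le> 1"
  shows "d u v \<le> k"
proof -
  obtain p where p: "length p = Suc k" "hd p = u" "last p = v" "\<forall>i<k. E (p ! i) (p ! Suc i)"
    using assms(1) unfolding has_walk_of_length_def by blast
  have bound: "d (p ! 0) (p ! i) \<le> i" if "i \<le> k" for i
    using that
  proof (induction i)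
    case (Suc i)
    have "d (p ! 0) (p ! Suc i) \<le> d (p ! 0) (p ! i) + d (p ! i) (p ! Suc i)" by (rule assms(2))
    also have "\<dots> \<le> i + 1" using Suc p(4) assms(4) by (intro add_mono) auto
    finally show ?case by simp
  qed (simp add: assms(3))
  have "p \<noteq> []" using p(1) by auto
  then have "p ! 0 = u" "p ! k = v"
    using p(1-3) by (simp_all add: hd_conv_nth last_conv_nth)
  with bound[of k] show ?thesis by simp
qed

lemma has_walk_of_length_0: "u \<in> V \<Longrightarrow> has_walk_of_length V E u u 0"
  unfolding has_walk_of_length_def by (intro exI[of _ "[u]"]) auto

lemma has_walk_of_length_Cons:
  assumes "u \<in> V" "E u w" "has_walk_of_length V E w v k"
  shows "has_walk_of_length V E u v (Suc k)"
proof -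
  obtain p where p: "length p = Suc k" "hd p = w" "last p = v" "set p \<subseteq> V"
    "\<forall>i<k. E (p ! i) (p ! Suc i)"
    using assms(3) unfolding has_walk_of_length_def by blast
  then have "p \<noteq> []" by auto
  then have "\<forall>i<Suc k. E ((u # p) ! i) ((u # p) ! Suc i)"
    using p assms(2) by (auto simp: less_Suc_eq_0_disj hd_conv_nth)
  then show ?thesis
    unfolding has_walk_of_length_def using p assms(1) \<open>p \<noteq> []\<close>
    by (intro exI[of _ "u # p"]) auto
qed

lemma hamming_step_towards:
  assumes "u \<in> hamming_vertices n q" "v \<in> hamming_vertices n q" "hamming_dist n u v = Suc k"
  obtains u' where "u' \<in> hamming_vertices n q" "hamming_adj n u u'" "hamming_dist n u' v = k"
proof -
  let ?D = "{j. j < n \<and> u ! j \<noteq> v ! j}"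
  have "?D \<noteq> {}" using assms(3) unfolding hamming_dist_def by force
  then obtain i where i: "i < n" "u ! i \<noteq> v ! i" by blast
  have len: "length u = n" "length v = n" and "set v \<subseteq> {1..q}"
    using assms(1,2) by (auto simp: hamming_vertices_def)
  then have vi: "v ! i \<in> {1..q}" using i(1) by (metis nth_mem subsetD)
  define u' where "u' = u[i := v ! i]"
  have "u' \<in> hamming_vertices n q"
    using assms(1) vi set_update_subset_insert[of u i "v ! i"]
    by (auto simp: u'_def hamming_vertices_def)
  moreover have "{j. j < n \<and> u ! j \<noteq> u' ! j} = {i}"
    using len i by (auto simp: u'_def nth_list_update)
  then have "hamming_adj n u u'" by (simp add: hamming_adj_def)
  moreover have "{j. j < n \<and> u' ! j \<noteq> v ! j} = ?D - {i}"
    using len i by (auto simp: u'_def nth_list_update)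
  then have "hamming_dist n u' v = k"
    using assms(3) i unfolding hamming_dist_def by (simp add: card_Diff_singleton)
  ultimately show ?thesis by (rule that)
qed

lemma has_walk_hamming_dist:
  assumes "u \<in> hamming_vertices n q" "v \<in> hamming_vertices n q"
  shows "has_walk_of_length (hamming_vertices n q) (hamming_adj n) u v (hamming_dist n u v)"
  using assms(1)
proof (induction "hamming_dist n u v" arbitrary: u)
  case 0
  then have "u = v" using assms(2) hamming_dist_eq_0_iff[of u n v]
    by (simp add: hamming_vertices_def)
  then show ?case using 0 by (simp add: has_walk_of_length_0)
next
  case (Suc k)
  obtain u' where u': "u' \<in> hamming_vertices n q" "hamming_adj n u u'" "hamming_dist n u' v = k"
    using hamming_step_towards[OF Suc.prems assms(2) Suc.hyps(2)[symmetric]] by blast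
  show ?case
    using has_walk_of_length_Cons[OF Suc.prems u'(2) Suc.hyps(1)[OF u'(3)[symmetric] u'(1)]]
    by (simp add: u'(3) flip: Suc.hyps(2))
qed

lemma graph_dist_hamming:
  assumes "u \<in> hamming_vertices n q" "v \<in> hamming_vertices n q"
  shows "graph_dist (hamming_vertices n q) (hamming_adj n) u v = hamming_dist n u v"
  unfolding graph_dist_def
proof (rule Least_equality)
  show "has_walk_of_length (hamming_vertices n q) (hamming_adj n) u v (hamming_dist n u v)"
    using assms by (rule has_walk_hamming_dist)
next
  fix k assume "has_walk_of_length (hamming_vertices n q) (hamming_adj n) u v k"
  then show "hamming_dist n u v \<le> k"
  proof (rule has_walk_of_length_dist_le)
    show "hamming_dist n x z \<le> hamming_dist n x y + hamming_dist n y z" for x y z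
      by (rule hamming_dist_triangle)
    show "hamming_dist n x x = 0" for x
      by (simp add: hamming_dist_def)
    show "hamming_adj n x y \<Longrightarrow> hamming_dist n x y \<le> 1" for x y
      by (simp add: hamming_adj_def hamming_dist_def)
  qed
qed

definition opposite :: "addr_sym \<Rightarrow> addr_sym \<Rightarrow> bool" where
  "opposite s s' \<longleftrightarrow> (s = Sa \<and> s' = Sb) \<or> (s = Sb \<and> s' = Sa)"

lemma of_bool_opposite:
  "(of_bool (opposite s s') :: 'a::semiring_1)
    = of_bool (s = Sa) * of_bool (s' = Sb) + of_bool (s = Sb) * of_bool (s' = Sa)"
  by (cases s; cases s') (simp_all add: opposite_def)

lemma card_lessThan_filter:
  fixes t :: nat
  shows "of_nat (card {i. i < t \<and> P i}) = (\<Sum>i<t. of_bool (P i))"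
proof -
  have "{i. i < t \<and> P i} = {..<t} \<inter> {i. P i}" by auto
  then show ?thesis by simp
qed

lemma addr_dist_eq_sum: "of_nat (addr_dist t x y) = (\<Sum>i<t. of_bool (opposite (x ! i) (y ! i)))"
  unfolding addr_dist_def opposite_def by (rule card_lessThan_filter)

lemma hamming_dist_eq_sum: "of_nat (hamming_dist n u v) = (\<Sum>i<n. of_bool (u ! i \<noteq> v ! i))"
  unfolding hamming_dist_def by (rule card_lessThan_filter)

definition unary_sym :: "nat \<Rightarrow> nat \<Rightarrow> addr_sym" where
  "unary_sym x k = (if k < x then Sb else if k = x then Sa else S0)"

text \<open>Coordinate \<open>i\<close> of a word over \<open>{1..m+1}\<close> is encoded in the positions \<open>i * m ..< i * m + m\<close>.\<close>
definition hamming_addr :: "nat \<Rightarrow> nat \<Rightarrow> nat list \<Rightarrow> addr_sym list" where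
  "hamming_addr n m w = map (\<lambda>j. unary_sym (w ! (j div m)) (j mod m + 1)) [0..<n * m]"

lemma opposite_unary_sym: "opposite (unary_sym x k) (unary_sym y k) \<longleftrightarrow> x \<noteq> y \<and> k = min x y"
  by (auto simp: opposite_def unary_sym_def)

lemma unary_block_dist:
  assumes "x \<in> {1..m+1}" "y \<in> {1..m+1}"
  shows "(\<Sum>r<m. of_bool (opposite (unary_sym x (r + 1)) (unary_sym y (r + 1))) :: nat)
       = of_bool (x \<noteq> y)"
proof (cases "x = y")
  case False
  then have "min x y - 1 \<in> {..<m}" using assms by auto
  moreover have "opposite (unary_sym x (r + 1)) (unary_sym y (r + 1)) \<longleftrightarrow> r = min x y - 1" for r
    using False assms by (auto simp: opposite_unary_sym)
  ultimately show ?thesis using False by simp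
qed (simp add: opposite_unary_sym)

lemma addr_dist_hamming_addr:
  assumes "length u = n" "set u \<subseteq> {1..m+1}" "length v = n" "set v \<subseteq> {1..m+1}"
  shows "addr_dist (n * m) (hamming_addr n m u) (hamming_addr n m v) = hamming_dist n u v"
proof -
  let ?opp = "\<lambda>j. of_bool (opposite (hamming_addr n m u ! j) (hamming_addr n m v ! j)) :: nat"
  have block: "(\<Sum>j\<in>{i * m..<i * m + m}. ?opp j) = of_bool (u ! i \<noteq> v ! i)" if "i < n" for i
  proof -
    have "(\<Sum>j\<in>{i * m..<i * m + m}. ?opp j) = (\<Sum>r<m. ?opp (r + i * m))"
      by (simp add: sum.shift_bounds_nat_ivl[of _ 0 "i * m" m, simplified] atLeast0LessThan add.commute)
    also have "\<dots> = (\<Sum>r<m. of_bool (opposite (unary_sym (u ! i) (r + 1)) (unary_sym (v ! i) (r + 1))))"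
    proof (rule sum.cong[OF refl])
      fix r assume r: "r \<in> {..<m}"
      then have "r + i * m < (i + 1) * m" by simp
      also have "\<dots> \<le> n * m" using that by (intro mult_right_mono) auto
      finally have "r + i * m < n * m" .
      with r show "?opp (r + i * m) = of_bool (opposite (unary_sym (u ! i) (r + 1)) (unary_sym (v ! i) (r + 1)))"
        by (simp add: hamming_addr_def)
    qed
    also have "\<dots> = of_bool (u ! i \<noteq> v ! i)"
    proof (rule unary_block_dist)
      show "u ! i \<in> {1..m+1}" "v ! i \<in> {1..m+1}"
        using that assms by (metis nth_mem subsetD)+
    qed
    finally show ?thesis .
  qed
  have "addr_dist (n * m) (hamming_addr n m u) (hamming_addr n m v) = (\<Sum>j<n * m. ?opp j)"
    using addr_dist_eq_sum[where 'a = nat] by simp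
  also have "\<dots> = (\<Sum>i<n. \<Sum>j\<in>{i * m..<i * m + m}. ?opp j)"
    by (rule sum.nat_group[symmetric])
  also have "\<dots> = (\<Sum>i<n. of_bool (u ! i \<noteq> v ! i))"
    by (rule sum.cong[OF refl]) (rule block, simp)
  also have "\<dots> = hamming_dist n u v"
    by (metis hamming_dist_eq_sum of_nat_id)
  finally show ?thesis .
qed

lemma is_addressing_hamming_addr:
  "is_addressing (hamming_vertices n (m + 1)) (hamming_adj n) (n * m) (hamming_addr n m)"
  unfolding is_addressing_def
proof (intro conjI ballI)
  fix u v assume uv: "u \<in> hamming_vertices n (m + 1)" "v \<in> hamming_vertices n (m + 1)"
  then have "addr_dist (n * m) (hamming_addr n m u) (hamming_addr n m v) = hamming_dist n u v"
    by (intro addr_dist_hamming_addr) (auto simp: hamming_vertices_def)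
  then show "graph_dist (hamming_vertices n (m + 1)) (hamming_adj n) u v
      = addr_dist (n * m) (hamming_addr n m u) (hamming_addr n m v)"
    using graph_dist_hamming[OF uv] by simp
qed (simp add: hamming_addr_def)

lemma homogeneous_system_nontrivial_solution:
  fixes a :: "nat \<Rightarrow> 'j \<Rightarrow> 'f::field"
  assumes "finite J" "T < card J"
  shows "\<exists>c. (\<exists>j\<in>J. c j \<noteq> 0) \<and> (\<forall>k<T. (\<Sum>j\<in>J. a k j * c j) = 0)"
  using assms
proof (induction T arbitrary: J a)
  case 0
  then obtain j where "j \<in> J" by fastforce
  then show ?case by (intro exI[of _ "\<lambda>_. 1"]) auto
next
  case (Suc T)
  show ?case
  proof (cases "\<forall>j\<in>J. a 0 j = 0")
    case True
    obtain c where "\<exists>j\<in>J. c j \<noteq> 0" "\<forall>k<T. (\<Sum>j\<in>J. a (Suc k) j * c j) = 0"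
      using Suc.IH[of J "\<lambda>k. a (Suc k)"] Suc.prems by auto
    then show ?thesis
      using True by (intro exI[of _ c]) (auto simp: less_Suc_eq_0_disj)
  next
    case False
    then obtain j0 where j0: "j0 \<in> J" "a 0 j0 \<noteq> 0" by auto
    define J' where "J' = J - {j0}"
    have "finite J'" "T < card J'"
      using Suc.prems j0 by (auto simp: J'_def card_Diff_singleton)
    \<comment> \<open>Gaussian elimination of the unknown \<open>j0\<close> by means of equation 0.\<close>
    then obtain c' where c': "\<exists>j\<in>J'. c' j \<noteq> 0"
      "\<forall>k<T. (\<Sum>j\<in>J'. (a (Suc k) j - a (Suc k) j0 / a 0 j0 * a 0 j) * c' j) = 0"
      using Suc.IH[of J' "\<lambda>k j. a (Suc k) j - a (Suc k) j0 / a 0 j0 * a 0 j"] by blast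
    define c where "c = c'(j0 := - (\<Sum>j\<in>J'. a 0 j * c' j) / a 0 j0)"
    have split: "(\<Sum>j\<in>J. g j * c j) = g j0 * c j0 + (\<Sum>j\<in>J'. g j * c' j)" for g
    proof -
      have "(\<Sum>j\<in>J. g j * c j) = g j0 * c j0 + (\<Sum>j\<in>J'. g j * c j)"
        using Suc.prems(1) j0(1) by (simp add: sum.remove J'_def)
      also have "(\<Sum>j\<in>J'. g j * c j) = (\<Sum>j\<in>J'. g j * c' j)"
        by (rule sum.cong) (auto simp: c_def J'_def)
      finally show ?thesis .
    qed
    have "(\<Sum>j\<in>J. a k j * c j) = 0" if "k < Suc T" for k
    proof (cases k)
      case 0
      then show ?thesis using split[of "a 0"] j0(2) by (simp add: c_def)
    next
      case (Suc k')
      have "(\<Sum>j\<in>J'. (a k j - a k j0 / a 0 j0 * a 0 j) * c' j)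
          = (\<Sum>j\<in>J'. a k j * c' j) - a k j0 / a 0 j0 * (\<Sum>j\<in>J'. a 0 j * c' j)"
        by (simp add: left_diff_distrib sum_subtractf sum_distrib_left mult.assoc)
      also have "\<dots> = (\<Sum>j\<in>J. a k j * c j)"
        using split[of "a k"] by (simp add: c_def)
      finally show ?thesis using c'(2) that Suc by simp
    qed
    moreover have "\<exists>j\<in>J. c j \<noteq> 0"
      using c'(1) by (auto simp: c_def J'_def)
    ultimately show ?thesis by blast
  qed
qed

lemma double_sum_bilinear:
  fixes c :: "'p \<Rightarrow> 'a::comm_semiring_1"
  shows "(\<Sum>p\<in>J. \<Sum>p'\<in>J. c p * c p' * (\<Sum>k\<in>K. x k p * y k p'))
       = (\<Sum>k\<in>K. (\<Sum>p\<in>J. c p * x k p) * (\<Sum>p\<in>J. c p * y k p))"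
proof -
  have "(\<Sum>p\<in>J. \<Sum>p'\<in>J. c p * c p' * (\<Sum>k\<in>K. x k p * y k p'))
      = (\<Sum>p\<in>J. \<Sum>p'\<in>J. \<Sum>k\<in>K. (c p * x k p) * (c p' * y k p'))"
    by (simp add: sum_distrib_left mult_ac)
  also have "\<dots> = (\<Sum>p\<in>J. \<Sum>k\<in>K. \<Sum>p'\<in>J. (c p * x k p) * (c p' * y k p'))"
    by (intro sum.cong refl sum.swap)
  also have "\<dots> = (\<Sum>k\<in>K. \<Sum>p\<in>J. \<Sum>p'\<in>J. (c p * x k p) * (c p' * y k p'))"
    by (rule sum.swap)
  also have "\<dots> = (\<Sum>k\<in>K. (\<Sum>p\<in>J. c p * x k p) * (\<Sum>p\<in>J. c p * y k p))"
    by (simp add: sum_product)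
  finally show ?thesis .
qed

lemma addressing_distance_form_eq_0:
  fixes c :: "'p \<Rightarrow> real"
  assumes f: "is_addressing V E t f" and w: "w ` J \<subseteq> V"
    and orth: "\<And>k. k < t \<Longrightarrow> (\<Sum>p\<in>J. c p * of_bool (f (w p) ! k = Sa)) = 0"
  shows "(\<Sum>p\<in>J. \<Sum>p'\<in>J. c p * c p' * real (graph_dist V E (w p) (w p'))) = 0"
proof -
  let ?A = "\<lambda>k p. of_bool (f (w p) ! k = Sa) :: real"
  let ?B = "\<lambda>k p. of_bool (f (w p) ! k = Sb) :: real"
  have "real (graph_dist V E (w p) (w p')) = (\<Sum>k<t. ?A k p * ?B k p' + ?B k p * ?A k p')"
    if "p \<in> J" "p' \<in> J" for p p'
  proof -
    have "graph_dist V E (w p) (w p') = addr_dist t (f (w p)) (f (w p'))"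
      using f w that unfolding is_addressing_def by blast
    then show ?thesis by (simp add: addr_dist_eq_sum of_bool_opposite)
  qed
  then have "(\<Sum>p\<in>J. \<Sum>p'\<in>J. c p * c p' * real (graph_dist V E (w p) (w p')))
      = (\<Sum>p\<in>J. \<Sum>p'\<in>J. c p * c p' * (\<Sum>k<t. ?A k p * ?B k p' + ?B k p * ?A k p'))"
    by (intro sum.cong) auto
  also have "\<dots> = (\<Sum>p\<in>J. \<Sum>p'\<in>J. c p * c p' * (\<Sum>k<t. ?A k p * ?B k p'))
                   + (\<Sum>p\<in>J. \<Sum>p'\<in>J. c p * c p' * (\<Sum>k<t. ?B k p * ?A k p'))"
    by (simp only: sum.distrib distrib_left)
  also have "\<dots> = (\<Sum>k<t. (\<Sum>p\<in>J. c p * ?A k p) * (\<Sum>p\<in>J. c p * ?B k p))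
                   + (\<Sum>k<t. (\<Sum>p\<in>J. c p * ?B k p) * (\<Sum>p\<in>J. c p * ?A k p))"
    by (simp only: double_sum_bilinear)
  also have "\<dots> = 0"
    using orth by (simp del: sum_mult_of_bool_eq)
  finally show ?thesis .
qed

lemma real_hamming_dist_eq:
  assumes "finite S" "\<And>k. k < n \<Longrightarrow> u ! k \<in> S"
  shows "real (hamming_dist n u v)
       = real n - (\<Sum>(k, a)\<in>{..<n} \<times> S. of_bool (u ! k = a) * of_bool (v ! k = a))"
proof -
  have agree: "(\<Sum>a\<in>S. of_bool (u ! k = a) * of_bool (v ! k = a)) = (of_bool (u ! k = v ! k) :: real)"
    if "k < n" for k
    using assms that by (simp add: sum.delta)
  have "real (hamming_dist n u v) = (\<Sum>k<n. 1 - of_bool (u ! k = v ! k))"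
    by (simp add: hamming_dist_eq_sum of_bool_not_iff)
  also have "\<dots> = real n - (\<Sum>k<n. \<Sum>a\<in>S. of_bool (u ! k = a) * of_bool (v ! k = a))"
    by (simp add: sum_subtractf agree)
  finally show ?thesis by (simp add: sum.cartesian_product)
qed

lemma hamming_distance_form:
  fixes c :: "'p \<Rightarrow> real"
  assumes "finite S" "(\<Sum>p\<in>J. c p) = 0" "\<And>p k. p \<in> J \<Longrightarrow> k < n \<Longrightarrow> w p ! k \<in> S"
  shows "(\<Sum>p\<in>J. \<Sum>p'\<in>J. c p * c p' * real (hamming_dist n (w p) (w p')))
       = - (\<Sum>(k, a)\<in>{..<n} \<times> S. (\<Sum>p\<in>J. c p * of_bool (w p ! k = a))\<^sup>2)"
proof -
  let ?E = "\<lambda>(k, a) p. of_bool (w p ! k = a) :: real"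
  have const: "(\<Sum>p\<in>J. \<Sum>p'\<in>J. c p * c p' * real n) = (\<Sum>p\<in>J. c p) * (\<Sum>p\<in>J. c p) * real n"
    by (simp add: sum_distrib_left sum_distrib_right mult_ac)
  have "(\<Sum>p\<in>J. \<Sum>p'\<in>J. c p * c p' * real (hamming_dist n (w p) (w p')))
      = (\<Sum>p\<in>J. \<Sum>p'\<in>J. c p * c p' * real n - c p * c p' * (\<Sum>ka\<in>{..<n} \<times> S. ?E ka p * ?E ka p'))"
    using assms(1,3) by (intro sum.cong refl) (simp add: real_hamming_dist_eq right_diff_distrib split_def)
  also have "\<dots> = (\<Sum>p\<in>J. \<Sum>p'\<in>J. c p * c p' * real n)
                   - (\<Sum>ka\<in>{..<n} \<times> S. (\<Sum>p\<in>J. c p * ?E ka p) * (\<Sum>p\<in>J. c p * ?E ka p))"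
    by (simp only: sum_subtractf double_sum_bilinear)
  also have "\<dots> = - (\<Sum>(k, a)\<in>{..<n} \<times> S. (\<Sum>p\<in>J. c p * of_bool (w p ! k = a))\<^sup>2)"
    using assms(2) by (simp add: const power2_eq_square split_def del: sum_mult_of_bool_eq)
  finally show ?thesis .
qed

lemma hamming_distance_form_eq_0_imp:
  fixes c :: "'p \<Rightarrow> real"
  assumes "finite S" "(\<Sum>p\<in>J. c p) = 0" "\<And>p k. p \<in> J \<Longrightarrow> k < n \<Longrightarrow> w p ! k \<in> S"
    and "(\<Sum>p\<in>J. \<Sum>p'\<in>J. c p * c p' * real (hamming_dist n (w p) (w p'))) = 0"
    and "k < n" "a \<in> S"
  shows "(\<Sum>p\<in>J. c p * of_bool (w p ! k = a)) = 0"
proof -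
  have "(\<Sum>(k, a)\<in>{..<n} \<times> S. (\<Sum>p\<in>J. c p * of_bool (w p ! k = a))\<^sup>2) = 0"
    using hamming_distance_form[OF assms(1-3)] assms(4) by simp
  then have "\<forall>(k, a)\<in>{..<n} \<times> S. (\<Sum>p\<in>J. c p * of_bool (w p ! k = a))\<^sup>2 = 0"
    using assms(1) by (subst (asm) sum_nonneg_eq_0_iff) auto
  then show ?thesis using assms(5,6) by auto
qed

text \<open>\<open>test_word n (0, 1)\<close> is the all-ones word.\<close>
definition test_word :: "nat \<Rightarrow> nat \<times> nat \<Rightarrow> nat list" where
  "test_word n p = (replicate n 1)[fst p := snd p]"

lemma test_word_nth: "k < n \<Longrightarrow> test_word n p ! k = (if k = fst p then snd p else 1)"
  by (simp add: test_word_def nth_list_update)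

lemma test_word_in_hamming_vertices:
  assumes "snd p \<in> {1..q}"
  shows "test_word n p \<in> hamming_vertices n q"
proof -
  have "set (test_word n p) \<subseteq> insert (snd p) (set (replicate n 1))"
    unfolding test_word_def by (rule set_update_subset_insert)
  also have "\<dots> \<subseteq> {1..q}"
    using assms by auto
  finally show ?thesis
    by (simp add: hamming_vertices_def test_word_def)
qed

lemma test_word_weights_eq_0:
  fixes n q :: nat and c :: "nat \<times> nat \<Rightarrow> real"
  defines "J \<equiv> insert (0, 1) ({..<n} \<times> {2..q})"
  assumes sum_c: "(\<Sum>p\<in>J. c p) = 0"
    and balanced: "\<And>i a. i < n \<Longrightarrow> a \<in> {2..q} \<Longrightarrow> (\<Sum>p\<in>J. c p * of_bool (test_word n p ! i = a)) = 0"
  shows "\<forall>p\<in>J. c p = 0"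
proof -
  have c_I: "c (i, a) = 0" if "i < n" "a \<in> {2..q}" for i a
  proof -
    \<comment> \<open>Only \<open>test_word n (i, a)\<close> carries the letter \<open>a \<ge> 2\<close> in coordinate \<open>i\<close>.\<close>
    have "(\<Sum>p\<in>J. c p * of_bool (test_word n p ! i = a)) = (\<Sum>p\<in>J. if p = (i, a) then c p else 0)"
      using that by (intro sum.cong refl) (auto simp: test_word_nth)
    also have "\<dots> = c (i, a)"
      using that by (simp add: J_def)
    finally show ?thesis using balanced that by simp
  qed
  then have "(\<Sum>p\<in>{..<n} \<times> {2..q}. c p) = 0"
    by (intro sum.neutral) auto
  then have "c (0, 1) = 0"
    using sum_c by (simp add: J_def)
  with c_I show ?thesis
    by (auto simp: J_def)
qed

lemma hamming_addressing_length_ge: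
  assumes f: "is_addressing (hamming_vertices n q) (hamming_adj n) t f" and "q \<ge> 1"
  shows "n * (q - 1) \<le> t"
proof (rule ccontr)
  assume "\<not> n * (q - 1) \<le> t"
  define J where "J = insert (0, 1) ({..<n} \<times> {2..q})"
  let ?w = "test_word n"
  have "finite J" "card J = n * (q - 1) + 1"
    by (auto simp: J_def)
  then have "t + 1 < card J"
    using \<open>\<not> n * (q - 1) \<le> t\<close> by simp
  have snd_J: "snd p \<in> {1..q}" if "p \<in> J" for p
    using that \<open>q \<ge> 1\<close> by (auto simp: J_def)
  then have w_J: "?w ` J \<subseteq> hamming_vertices n q"
    by (auto intro: test_word_in_hamming_vertices)
  have entries: "?w p ! k \<in> {1..q}" if "p \<in> J" "k < n" for p k
    using that snd_J \<open>q \<ge> 1\<close> by (auto simp: test_word_nth)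
  \<comment> \<open>Equations \<open>k < t\<close> make \<open>c\<close> orthogonal to the \<open>a\<close>-positions; equation \<open>t\<close> makes it sum to zero.\<close>
  obtain c :: "nat \<times> nat \<Rightarrow> real" where c_nonzero: "\<exists>p\<in>J. c p \<noteq> 0"
    and c_sol: "\<forall>k<t + 1. (\<Sum>p\<in>J. (if k < t then of_bool (f (?w p) ! k = Sa) else 1) * c p) = 0"
    using homogeneous_system_nontrivial_solution[OF \<open>finite J\<close> \<open>t + 1 < card J\<close>,
        of "\<lambda>k p. if k < t then of_bool (f (?w p) ! k = Sa) else 1"]
    by blast
  have orth: "(\<Sum>p\<in>J. c p * of_bool (f (?w p) ! k = Sa)) = 0" if "k < t" for k
    using c_sol[rule_format, of k] that by (simp add: mult.commute)
  have sum_c: "(\<Sum>p\<in>J. c p) = 0"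
    using c_sol[rule_format, of t] by simp
  have "(\<Sum>p\<in>J. \<Sum>p'\<in>J. c p * c p' * real (hamming_dist n (?w p) (?w p')))
      = (\<Sum>p\<in>J. \<Sum>p'\<in>J. c p * c p' * real (graph_dist (hamming_vertices n q) (hamming_adj n) (?w p) (?w p')))"
    using w_J by (intro sum.cong refl) (simp add: graph_dist_hamming image_subset_iff)
  also have "\<dots> = 0"
    by (rule addressing_distance_form_eq_0[OF f w_J orth])
  finally have "(\<Sum>p\<in>J. c p * of_bool (?w p ! i = a)) = 0" if "i < n" "a \<in> {2..q}" for i a
    using hamming_distance_form_eq_0_imp[OF _ sum_c entries] that by simp
  then have "\<forall>p\<in>J. c p = 0"
    using test_word_weights_eq_0[where c = c and n = n and q = q] sum_c unfolding J_def by blast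
  with c_nonzero show False by blast
qed

theorem theorem13:
  fixes n q :: nat
  assumes "n \<ge> 1" and "q \<ge> 2"
  shows "addressing_number (hamming_vertices n q) (hamming_adj n) = n * (q - 1)"
  unfolding addressing_number_def
proof (rule Least_equality)
  have "q = (q - 1) + 1" using assms(2) by simp
  then show "\<exists>f. is_addressing (hamming_vertices n q) (hamming_adj n) (n * (q - 1)) f"
    using is_addressing_hamming_addr[of n "q - 1"] by metis
next
  fix t assume "\<exists>f. is_addressing (hamming_vertices n q) (hamming_adj n) t f"
  then obtain f where "is_addressing (hamming_vertices n q) (hamming_adj n) t f" ..
  then show "n * (q - 1) \<le> t"
    by (rule hamming_addressing_length_ge) (use assms(2) in simp)
qed

end
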